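(* Let $M>0$, $\beta^*>0$, $0<I_0<M$, and let $g$ be the log-normal density $g(t)=\frac{1}{t\sigma\sqrt{2\pi}}\exp\!\big(-\frac{(\ln t-\mu)^2}{2\sigma^2}\big)$ for $t>0$, $g(t)=0$ for $t\le0$ ($\mu\in\mathbb{R}$, $\sigma>0$). Let $I$ be the unique $C^1$ solution on $[0,\infty)$ of \[ I'(t)=\beta^*(M-I(t))\Big(I(t)-\int_0^t g(t-s)I(s)\,ds\Big),\qquad I(0)=I_0, \] and set $I_a(t)=I(t)-\int_0^t g(t-s)I(s)\,ds$. Then the improper integral $\int_0^\infty I_a(t)\,dt$ converges. *)

theory Defs
  imports "HOL-Analysis.Analysis"
begin

definition lognormal_density :: "real \<Rightarrow> real \<Rightarrow> real \<Rightarrow> real" where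
  "lognormal_density \<mu> \<sigma> t =
     (if t > 0 then exp (- ((ln t - \<mu>)\<^sup>2) / (2 * \<sigma>\<^sup>2)) / (t * \<sigma> * sqrt (2 * pi)) else 0)"

end

(* Let G t be the mass of the log-normal density g on [0, t] and I_a the active part of I.
   Along a solution, (M - I t) * exp (beta * integral of I_a over [0, t]) is constant, so I < M.
   At a first zero t0 of I_a, I would still be nondecreasing on [0, t0], so the convolution at t0
   would be at most G t0 * I t0 < I t0; hence I_a > 0 throughout and its integral up to T is
   nondecreasing in T. Exchanging the order of integration gives
     integral of I_a over [0, T] = integral over [0, T] of I s * (1 - G (T - s)) ds,
   which is at most M times the integral of the survival function 1 - G over [0, infinity),
   i.e. M times the mean of the log-normal distribution: finite, because the density decays
   faster than any power (we use (1 + t)^3 * g t bounded). *)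

theory Submission
  imports Defs "HOL-Probability.Distributions"
begin

lemma mono_on_tendsto_SUP_at_top:
  fixes f :: "real \<Rightarrow> real"
  assumes mono: "mono_on {a..} f" and bdd: "bdd_above (f ` {a..})"
  shows "(f \<longlongrightarrow> (SUP x\<in>{a..}. f x)) at_top"
proof (rule increasing_tendsto)
  show "\<forall>\<^sub>F x in at_top. f x \<le> (SUP x\<in>{a..}. f x)"
    using bdd by (auto intro: cSUP_upper simp: eventually_at_top_linorder)
  fix y assume "y < (SUP x\<in>{a..}. f x)"
  then obtain x where x: "a \<le> x" "y < f x"
    using less_cSUP_iff[OF _ bdd] by auto
  have "y < f z" if "x \<le> z" for z
    using x that mono_onD[OF mono, of x z] by auto
  then show "\<forall>\<^sub>F z in at_top. y < f z"
    by (auto simp: eventually_at_top_linorder)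
qed

lemma has_integral_inverse_square_shift:
  fixes a b :: real
  assumes "-1 < a" "a \<le> b"
  shows "((\<lambda>v. 1 / (1 + v)\<^sup>2) has_integral 1 / (1 + a) - 1 / (1 + b)) {a..b}"
proof -
  have "((\<lambda>v. 1 / (1 + v)\<^sup>2) has_integral (- 1 / (1 + b)) - (- 1 / (1 + a))) {a..b}"
  proof (rule fundamental_theorem_of_calculus)
    fix v assume "v \<in> {a..b}"
    then have "1 + v > 0" using assms by auto
    then show "((\<lambda>v. - 1 / (1 + v)) has_vector_derivative 1 / (1 + v)\<^sup>2) (at v within {a..b})"
      unfolding has_real_derivative_iff_has_vector_derivative[symmetric]
      by (auto intro!: derivative_eq_intros simp: field_simps power2_eq_square)
  qed (use assms in auto)
  then show ?thesis by simp
qed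

lemma has_integral_inverse_cube_shift:
  fixes a b :: real
  assumes "-1 < a" "a \<le> b"
  shows "((\<lambda>v. 1 / (1 + v) ^ 3) has_integral 1 / (2 * (1 + a)\<^sup>2) - 1 / (2 * (1 + b)\<^sup>2)) {a..b}"
proof -
  have "((\<lambda>v. 1 / (1 + v) ^ 3) has_integral (- 1 / (2 * (1 + b)\<^sup>2)) - (- 1 / (2 * (1 + a)\<^sup>2))) {a..b}"
  proof (rule fundamental_theorem_of_calculus)
    fix v assume "v \<in> {a..b}"
    then have v: "1 + v > 0" using assms by auto
    have outer: "((\<lambda>w. - 1 / (2 * w\<^sup>2)) has_real_derivative 1 / w ^ 3) (at w)" if "w > 0" for w :: real
      using that by (auto intro!: derivative_eq_intros simp: field_simps power2_eq_square power3_eq_cube)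
    note outer[OF v]
    moreover have "((\<lambda>v. 1 + v) has_real_derivative 1) (at v within {a..b})"
      by (auto intro!: derivative_eq_intros)
    ultimately have "((\<lambda>v. - 1 / (2 * (1 + v)\<^sup>2)) has_real_derivative 1 / (1 + v) ^ 3 * 1) (at v within {a..b})"
      by (rule DERIV_chain2)
    then show "((\<lambda>v. - 1 / (2 * (1 + v)\<^sup>2)) has_vector_derivative 1 / (1 + v) ^ 3) (at v within {a..b})"
      by (simp add: has_real_derivative_iff_has_vector_derivative)
  qed (use assms in auto)
  then show ?thesis by simp
qed

lemma integral_reflect_ivl:
  fixes f :: "real \<Rightarrow> 'a::euclidean_space"
  shows "integral {0..t} (\<lambda>s. f (t - s)) = integral {0..t} f"
proof -
  have "integral {0..t} (\<lambda>s. f (t - s)) = integral {-t - (-t)..0 - (-t)} (\<lambda>s. (\<lambda>y. f (- y)) (s + (-t)))"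
    by (simp add: algebra_simps)
  also have "\<dots> = integral {-t..0} (\<lambda>y. f (- y))"
    by (rule integral_shift_real_ivl)
  also have "\<dots> = integral {0..t} f"
    using Henstock_Kurzweil_Integration.integral_reflect_real[of t 0 f] by simp
  finally show ?thesis .
qed

section \<open>Convolution with a causal kernel\<close>

locale causal_kernel =
  fixes g :: "real \<Rightarrow> real"
  assumes kernel_continuous: "continuous_on UNIV g"
    and kernel_vanishes: "\<And>t. t \<le> 0 \<Longrightarrow> g t = 0"
begin

lemma continuous_on_convolution_integrand:
  assumes "continuous_on {0..T} f"
  shows "continuous_on ({0..T} \<times> {0..T}) (\<lambda>(t, s). g (t - s) * f s)"
proof -
  have "continuous_on ({0..T} \<times> {0..T}) (\<lambda>p. g (fst p - snd p) * f (snd p))"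
    by (intro continuous_on_mult continuous_on_compose2[OF kernel_continuous]
        continuous_on_compose2[OF assms] continuous_intros) auto
  then show ?thesis by (simp add: case_prod_beta')
qed

lemma integral_causal_convolution_extend:
  assumes f: "continuous_on {0..T} f" and t: "0 \<le> t" "t \<le> T"
  shows "integral {0..T} (\<lambda>s. g (t - s) * f s) = integral {0..t} (\<lambda>s. g (t - s) * f s)"
proof -
  have "(\<lambda>s. g (t - s) * f s) integrable_on {0..T}"
    by (intro integrable_continuous_real continuous_on_mult f
        continuous_on_compose2[OF kernel_continuous] continuous_intros) auto
  then have "integral {0..T} (\<lambda>s. g (t - s) * f s)
      = integral {0..t} (\<lambda>s. g (t - s) * f s) + integral {t..T} (\<lambda>s. g (t - s) * f s)"
    using t by (simp add: Henstock_Kurzweil_Integration.integral_combine)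
  moreover have "integral {t..T} (\<lambda>s. g (t - s) * f s) = integral {t..T} (\<lambda>_. 0)"
    by (rule integral_cong) (simp add: kernel_vanishes)
  ultimately show ?thesis by simp
qed

lemma continuous_on_causal_convolution:
  assumes f: "continuous_on {0..T} f"
  shows "continuous_on {0..T} (\<lambda>t. integral {0..t} (\<lambda>s. g (t - s) * f s))"
proof -
  have "continuous_on {0..T} (\<lambda>t. integral (cbox 0 T) (\<lambda>s. g (t - s) * f s))"
    using continuous_on_convolution_integrand[OF f] by (intro integral_continuous_on_param) simp
  then show ?thesis
    by (rule continuous_on_cong[THEN iffD1, rotated 2])
      (auto simp: integral_causal_convolution_extend[OF f])
qed

lemma continuous_on_kernel_mass_reflect:
  "continuous_on {0..T} (\<lambda>s. integral {0..T - s} g)"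
proof -
  have "continuous_on {0..T} (\<lambda>u. integral {0..u} g)"
    by (intro indefinite_integral_continuous_1 integrable_continuous_real
        continuous_on_subset[OF kernel_continuous]) simp
  then show ?thesis
    by (rule continuous_on_compose2) (auto intro!: continuous_intros)
qed

lemma integral_causal_kernel_shift:
  assumes "0 \<le> x" "x \<le> T"
  shows "integral {0..T} (\<lambda>t. g (t - x)) = integral {0..T - x} g"
proof -
  have g_int: "g integrable_on {-x..T - x}"
    by (intro integrable_continuous_real continuous_on_subset[OF kernel_continuous]) auto
  have "integral {0..T} (\<lambda>t. g (t - x)) = integral {-x..T - x} g"
    using integral_shift_real_ivl[where f = g and a = "-x" and b = "T - x" and c = "-x"] by simp
  also have "\<dots> = integral {-x..0} g + integral {0..T - x} g"
    using assms g_int by (simp add: Henstock_Kurzweil_Integration.integral_combine)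
  also have "integral {-x..0} g = integral {-x..0} (\<lambda>_. 0)"
    by (rule integral_cong) (simp add: kernel_vanishes)
  finally show ?thesis by simp
qed

lemma integral_causal_convolution_swap:
  assumes f: "continuous_on {0..T} f"
  shows "integral {0..T} (\<lambda>t. integral {0..t} (\<lambda>s. g (t - s) * f s))
       = integral {0..T} (\<lambda>s. f s * integral {0..T - s} g)"
proof -
  have "integral {0..T} (\<lambda>t. integral {0..t} (\<lambda>s. g (t - s) * f s))
      = integral {0..T} (\<lambda>t. integral {0..T} (\<lambda>s. g (t - s) * f s))"
    by (rule integral_cong) (simp add: integral_causal_convolution_extend[OF f])
  also have "\<dots> = integral {0..T} (\<lambda>s. integral {0..T} (\<lambda>t. g (t - s) * f s))"
  proof -
    have "continuous_on (cbox (0, 0) (T, T)) (\<lambda>(t, s). g (t - s) * f s)"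
      using continuous_on_convolution_integrand[OF f] by (simp add: cbox_Pair_eq)
    from integral_swap_continuous[OF this] show ?thesis by simp
  qed
  also have "\<dots> = integral {0..T} (\<lambda>s. f s * integral {0..T - s} g)"
    by (rule integral_cong) (simp add: integral_causal_kernel_shift mult.commute)
  finally show ?thesis .
qed

end

section \<open>The log-normal density\<close>

lemma lognormal_density_nonpos [simp]: "t \<le> 0 \<Longrightarrow> lognormal_density \<mu> \<sigma> t = 0"
  by (simp add: lognormal_density_def)

lemma continuous_on_std_normal_density: "continuous_on A std_normal_density"
  unfolding std_normal_density_def by (intro continuous_intros) simp

lemma has_integral_std_normal_density: "(std_normal_density has_integral 1) UNIV"
proof -
  have "(std_normal_density has_integral integral\<^sup>L lborel std_normal_density) UNIV"
    by (rule has_integral_integral_lborel) simp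
  then show ?thesis
    using integral_normal_density[of 0 1] by simp
qed

lemma integral_std_normal_density_le_1: "integral {a..b} std_normal_density \<le> 1"
proof -
  have "integral {a..b} std_normal_density \<le> integral UNIV std_normal_density"
    using has_integral_std_normal_density
    by (intro integral_subset_le integrable_continuous_real continuous_on_std_normal_density)
      (auto simp: has_integral_integrable)
  then show ?thesis
    using has_integral_std_normal_density by (simp add: integral_unique)
qed

context
  fixes \<mu> \<sigma> :: real
  assumes \<sigma>: "0 < \<sigma>"
begin

lemma lognormal_density_pos: "0 < t \<Longrightarrow> 0 < lognormal_density \<mu> \<sigma> t"
  using \<sigma> by (simp add: lognormal_density_def)

lemma lognormal_density_nonneg: "0 \<le> lognormal_density \<mu> \<sigma> t"
  using lognormal_density_pos[of t] by (cases "0 < t") auto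

text \<open>In the variable \<open>w = ln t\<close>, \<open>t powr k * lognormal_density \<mu> \<sigma> t\<close> is a Gaussian
  in \<open>w\<close>; hence all moments of the log-normal distribution are finite.\<close>
lemma lognormal_density_moment_bound: "\<exists>C>0. \<forall>t>0. t powr k * lognormal_density \<mu> \<sigma> t \<le> C"
proof -
  define C where "C = exp ((k - 1) * \<mu> + (k - 1)\<^sup>2 * \<sigma>\<^sup>2 / 2) / (\<sigma> * sqrt (2 * pi))"
  have "t powr k * lognormal_density \<mu> \<sigma> t \<le> C" if t: "0 < t" for t
  proof -
    define w where "w = ln t"
    have "t powr k * lognormal_density \<mu> \<sigma> t
        = exp (k * w) * exp (- ((w - \<mu>)\<^sup>2) / (2 * \<sigma>\<^sup>2)) / (exp w * \<sigma> * sqrt (2 * pi))"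
      using t by (simp add: lognormal_density_def powr_def w_def)
    also have "\<dots> = exp (k * w - w - (w - \<mu>)\<^sup>2 / (2 * \<sigma>\<^sup>2)) / (\<sigma> * sqrt (2 * pi))"
      by (simp add: exp_diff exp_add exp_minus field_simps)
    also have "\<dots> \<le> C"
    proof -
      have "(k - 1) * \<mu> + (k - 1)\<^sup>2 * \<sigma>\<^sup>2 / 2 - (k * w - w - (w - \<mu>)\<^sup>2 / (2 * \<sigma>\<^sup>2))
          = (w - \<mu> - (k - 1) * \<sigma>\<^sup>2)\<^sup>2 / (2 * \<sigma>\<^sup>2)"
        using \<sigma> by (simp add: field_simps power2_eq_square)
      moreover have "0 \<le> (w - \<mu> - (k - 1) * \<sigma>\<^sup>2)\<^sup>2 / (2 * \<sigma>\<^sup>2)"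
        by simp
      ultimately have "k * w - w - (w - \<mu>)\<^sup>2 / (2 * \<sigma>\<^sup>2) \<le> (k - 1) * \<mu> + (k - 1)\<^sup>2 * \<sigma>\<^sup>2 / 2"
        by linarith
      then show ?thesis
        unfolding C_def using \<sigma> by (intro divide_right_mono) auto
    qed
    finally show ?thesis .
  qed
  moreover have "0 < C"
    unfolding C_def using \<sigma> by (intro divide_pos_pos) auto
  ultimately show ?thesis by blast
qed

lemma lognormal_density_tendsto_0: "(lognormal_density \<mu> \<sigma> \<longlongrightarrow> 0) (at 0)"
proof -
  obtain C where "0 < C" and C: "\<And>t. 0 < t \<Longrightarrow> t powr (-1) * lognormal_density \<mu> \<sigma> t \<le> C"
    using lognormal_density_moment_bound by blast
  have "norm (lognormal_density \<mu> \<sigma> t) \<le> C * \<bar>t\<bar>" for t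
  proof (cases "0 < t")
    case True
    then show ?thesis
      using C[OF True] lognormal_density_nonneg[of t] by (simp add: powr_minus field_simps)
  next
    case False
    then show ?thesis
      using mult_nonneg_nonneg[of C "\<bar>t\<bar>"] \<open>0 < C\<close> by simp
  qed
  then show ?thesis
    by (rule Lim_null_comparison[OF always_eventually[OF allI]])
      (use tendsto_mult_left[OF tendsto_rabs[OF tendsto_ident_at], of C 0 UNIV] in simp)
qed

lemma continuous_on_lognormal_density: "continuous_on UNIV (lognormal_density \<mu> \<sigma>)"
proof -
  have "isCont (lognormal_density \<mu> \<sigma>) x" for x
  proof (cases x "0 :: real" rule: linorder_cases)
    case less
    have "continuous_on {..<0} (lognormal_density \<mu> \<sigma>)"
      by (rule continuous_on_cong[where f = "\<lambda>_. 0", THEN iffD1]) auto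
    then show ?thesis
      using less by (simp add: continuous_on_eq_continuous_at)
  next
    case equal
    then show ?thesis
      using lognormal_density_tendsto_0 by (simp add: isCont_def)
  next
    case greater
    have "continuous_on {0<..} (\<lambda>t. exp (- ((ln t - \<mu>)\<^sup>2) / (2 * \<sigma>\<^sup>2)) / (t * \<sigma> * sqrt (2 * pi)))"
      using \<sigma> by (intro continuous_intros) auto
    then have "continuous_on {0<..} (lognormal_density \<mu> \<sigma>)"
      by (rule continuous_on_cong[THEN iffD1, rotated 2]) (auto simp: lognormal_density_def)
    then show ?thesis
      using greater by (simp add: continuous_on_eq_continuous_at)
  qed
  then show ?thesis by (simp add: continuous_at_imp_continuous_on)
qed

lemma lognormal_density_integrable_on: "lognormal_density \<mu> \<sigma> integrable_on {a..b}"
  by (intro integrable_continuous_real continuous_on_subset[OF continuous_on_lognormal_density]) simp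

lemma has_integral_lognormal_density:
  assumes "0 < a" "a \<le> b"
  shows "(lognormal_density \<mu> \<sigma> has_integral
      integral {(ln a - \<mu>) / \<sigma>..(ln b - \<mu>) / \<sigma>} std_normal_density) {a..b}"
proof -
  define z where "z u = (ln u - \<mu>) / \<sigma>" for u
  have "((\<lambda>u. (1 / (\<sigma> * u)) *\<^sub>R std_normal_density (z u))
      has_integral integral {z a..z b} std_normal_density) {a..b}"
  proof (rule has_integral_substitution)
    show "z ` {a..b} \<subseteq> {z a..z b}" "z a \<le> z b"
      using assms \<sigma> by (auto simp: z_def divide_right_mono)
    show "continuous_on {z a..z b} std_normal_density"
      by (rule continuous_on_std_normal_density)
    fix u assume "u \<in> {a..b}"
    then show "(z has_real_derivative 1 / (\<sigma> * u)) (at u within {a..b})"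
      using assms \<sigma> unfolding z_def by (auto intro!: derivative_eq_intros)
  qed (use assms in auto)
  moreover have "(1 / (\<sigma> * u)) *\<^sub>R std_normal_density (z u) = lognormal_density \<mu> \<sigma> u"
    if "u \<in> {a..b}" for u
  proof -
    have "(z u)\<^sup>2 / 2 = (ln u - \<mu>)\<^sup>2 / (2 * \<sigma>\<^sup>2)"
      using \<sigma> by (simp add: z_def power_divide)
    then show ?thesis
      using that assms \<sigma> by (simp add: std_normal_density_def lognormal_density_def field_simps)
  qed
  ultimately show ?thesis
    unfolding z_def by (rule has_integral_eq[rotated]) auto
qed

lemma integral_lognormal_density_split:
  assumes "a \<le> c" "c \<le> b"
  shows "integral {a..b} (lognormal_density \<mu> \<sigma>)
    = integral {a..c} (lognormal_density \<mu> \<sigma>) + integral {c..b} (lognormal_density \<mu> \<sigma>)"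
  using Henstock_Kurzweil_Integration.integral_combine[OF assms lognormal_density_integrable_on]
  by simp

lemma integral_lognormal_density_nonneg: "0 \<le> integral {a..b} (lognormal_density \<mu> \<sigma>)"
  by (intro integral_nonneg lognormal_density_integrable_on lognormal_density_nonneg)

lemma integral_lognormal_density_mono:
  assumes "0 \<le> a" "a \<le> b"
  shows "integral {0..a} (lognormal_density \<mu> \<sigma>) \<le> integral {0..b} (lognormal_density \<mu> \<sigma>)"
  using integral_lognormal_density_split[of 0 a b] integral_lognormal_density_nonneg[of a b] assms
  by simp

lemma integral_lognormal_density_le_1:
  assumes T: "0 \<le> T"
  shows "integral {0..T} (lognormal_density \<mu> \<sigma>) \<le> 1"
proof (rule field_le_epsilon)
  fix e :: real assume e: "0 < e"
  obtain C where "0 < C" and C0: "\<And>t. 0 < t \<Longrightarrow> t powr 0 * lognormal_density \<mu> \<sigma> t \<le> C"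
    using lognormal_density_moment_bound by blast
  have C: "lognormal_density \<mu> \<sigma> t \<le> C" if "0 < t" for t
    using C0[OF that] that by simp
  define \<epsilon> where "\<epsilon> = min (T + 1) (e / C)"
  have \<epsilon>: "0 < \<epsilon>" "C * \<epsilon> \<le> e"
    using T e \<open>0 < C\<close> by (auto simp: \<epsilon>_def min_def field_simps)
  have "integral {0..\<epsilon>} (lognormal_density \<mu> \<sigma>) \<le> integral {0..\<epsilon>} (\<lambda>_. C)"
    using C \<open>0 < C\<close> by (intro integral_le lognormal_density_integrable_on)
      (auto simp: less_eq_real_def)
  also have "\<dots> \<le> e"
    using \<epsilon> by (simp add: mult.commute)
  finally have "integral {0..\<epsilon>} (lognormal_density \<mu> \<sigma>) \<le> e" .
  moreover have "integral {\<epsilon>..max \<epsilon> T} (lognormal_density \<mu> \<sigma>) \<le> 1"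
    using has_integral_lognormal_density[OF \<epsilon>(1), of "max \<epsilon> T"] integral_std_normal_density_le_1
    by (simp add: integral_unique)
  ultimately have "integral {0..max \<epsilon> T} (lognormal_density \<mu> \<sigma>) \<le> 1 + e"
    using integral_lognormal_density_split[of 0 \<epsilon> "max \<epsilon> T"] \<epsilon> by simp
  then show "integral {0..T} (lognormal_density \<mu> \<sigma>) \<le> 1 + e"
    using integral_lognormal_density_mono[OF T, of "max \<epsilon> T"] by simp
qed

lemma tendsto_integral_lognormal_density:
  "((\<lambda>T. integral {0..T} (lognormal_density \<mu> \<sigma>)) \<longlongrightarrow> 1) at_top"
proof (rule increasing_tendsto)
  show "\<forall>\<^sub>F T in at_top. integral {0..T} (lognormal_density \<mu> \<sigma>) \<le> 1"
    using integral_lognormal_density_le_1 by (auto simp: eventually_at_top_linorder)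
  fix y :: real assume "y < 1"
  then have "\<exists>B>0. \<forall>a b. ball 0 B \<subseteq> cbox a b
      \<longrightarrow> norm (integral (cbox a b) std_normal_density - 1) < 1 - y"
    using has_integral_std_normal_density unfolding has_integral_alt' by simp
  then obtain B where "0 < B" and B: "\<And>a b. ball 0 B \<subseteq> cbox a b
      \<Longrightarrow> norm (integral (cbox a b) std_normal_density - 1) < 1 - y"
    by blast
  have "y < integral {0..T} (lognormal_density \<mu> \<sigma>)" if T: "exp (\<mu> + \<sigma> * B) \<le> T" for T
  proof -
    define \<epsilon> where "\<epsilon> = exp (\<mu> - \<sigma> * B)"
    have "exp (\<mu> - \<sigma> * B) \<le> exp (\<mu> + \<sigma> * B)"
      using \<sigma> \<open>0 < B\<close> by simp
    then have \<epsilon>: "0 < \<epsilon>" "\<epsilon> \<le> T"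
      using T unfolding \<epsilon>_def by (simp, linarith)
    have "\<mu> + \<sigma> * B \<le> ln T"
      using ln_le_cancel_iff[of "exp (\<mu> + \<sigma> * B)" T] T \<epsilon> by simp
    then have "B \<le> (ln T - \<mu>) / \<sigma>"
      using \<sigma> by (simp add: field_simps)
    moreover have "(ln \<epsilon> - \<mu>) / \<sigma> = - B"
      using \<sigma> by (simp add: \<epsilon>_def)
    ultimately have "ball 0 B \<subseteq> cbox ((ln \<epsilon> - \<mu>) / \<sigma>) ((ln T - \<mu>) / \<sigma>)"
      by (auto simp: dist_real_def)
    from B[OF this]
    have "y < integral {(ln \<epsilon> - \<mu>) / \<sigma>..(ln T - \<mu>) / \<sigma>} std_normal_density"
      by (auto simp: abs_less_iff)
    also have "\<dots> = integral {\<epsilon>..T} (lognormal_density \<mu> \<sigma>)"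
      using has_integral_lognormal_density[OF \<epsilon>] by (simp add: integral_unique)
    also have "\<dots> \<le> integral {0..T} (lognormal_density \<mu> \<sigma>)"
      using integral_lognormal_density_split[of 0 \<epsilon> T] integral_lognormal_density_nonneg[of 0 \<epsilon>] \<epsilon>
      by simp
    finally show ?thesis .
  qed
  then show "\<forall>\<^sub>F T in at_top. y < integral {0..T} (lognormal_density \<mu> \<sigma>)"
    by (auto simp: eventually_at_top_linorder)
qed

lemma integral_lognormal_density_less_1:
  assumes t: "0 \<le> t"
  shows "integral {0..t} (lognormal_density \<mu> \<sigma>) < 1"
proof -
  have "integral (cbox t (t + 1)) (\<lambda>_. 0) < integral (cbox t (t + 1)) (lognormal_density \<mu> \<sigma>)"
    using t continuous_on_subset[OF continuous_on_lognormal_density]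
    by (intro integral_less continuous_on_const lognormal_density_pos) auto
  then have "0 < integral {t..t + 1} (lognormal_density \<mu> \<sigma>)"
    by simp
  moreover have "integral {0..t + 1} (lognormal_density \<mu> \<sigma>) \<le> 1"
    using t by (intro integral_lognormal_density_le_1) simp
  ultimately show ?thesis
    using integral_lognormal_density_split[of 0 t "t + 1"] t by simp
qed

lemma lognormal_density_cubic_decay: "\<exists>C. \<forall>t. (1 + t) ^ 3 * lognormal_density \<mu> \<sigma> t \<le> C"
proof -
  obtain C\<^sub>0 where "0 < C\<^sub>0" and C\<^sub>0: "\<And>t. 0 < t \<Longrightarrow> t powr 0 * lognormal_density \<mu> \<sigma> t \<le> C\<^sub>0"
    using lognormal_density_moment_bound by blast
  obtain C\<^sub>3 where "0 < C\<^sub>3" and C\<^sub>3: "\<And>t. 0 < t \<Longrightarrow> t powr 3 * lognormal_density \<mu> \<sigma> t \<le> C\<^sub>3"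
    using lognormal_density_moment_bound by blast
  have "(1 + t) ^ 3 * lognormal_density \<mu> \<sigma> t \<le> 4 * (C\<^sub>0 + C\<^sub>3)" for t
  proof (cases "0 < t")
    case True
    have "(1 + t) ^ 3 \<le> 4 * (1 + t ^ 3)"
    proof -
      have "0 \<le> 3 * (t - 1)\<^sup>2 * (t + 1)" using True by simp
      then show ?thesis by (simp add: power2_eq_square power3_eq_cube algebra_simps)
    qed
    then have "(1 + t) ^ 3 * lognormal_density \<mu> \<sigma> t \<le> 4 * (1 + t ^ 3) * lognormal_density \<mu> \<sigma> t"
      using lognormal_density_nonneg[of t] by (rule mult_right_mono)
    also have "\<dots> = 4 * (t powr 0 * lognormal_density \<mu> \<sigma> t + t powr 3 * lognormal_density \<mu> \<sigma> t)"
      using True by (simp add: powr_realpow algebra_simps)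
    also have "\<dots> \<le> 4 * (C\<^sub>0 + C\<^sub>3)"
      using C\<^sub>0[OF True] C\<^sub>3[OF True] by simp
    finally show ?thesis .
  next
    case False
    then show ?thesis
      using \<open>0 < C\<^sub>0\<close> \<open>0 < C\<^sub>3\<close> by simp
  qed
  then show ?thesis by blast
qed

lemma lognormal_survival_le: "\<exists>K. \<forall>u\<ge>0. 1 - integral {0..u} (lognormal_density \<mu> \<sigma>) \<le> K / (1 + u)\<^sup>2"
proof -
  obtain C where C: "\<And>t. (1 + t) ^ 3 * lognormal_density \<mu> \<sigma> t \<le> C"
    using lognormal_density_cubic_decay by blast
  have "1 - integral {0..u} (lognormal_density \<mu> \<sigma>) \<le> (C / 2) / (1 + u)\<^sup>2" if u: "0 \<le> u" for u
  proof (rule tendsto_upperbound)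
    show "((\<lambda>T. integral {0..T} (lognormal_density \<mu> \<sigma>) - integral {0..u} (lognormal_density \<mu> \<sigma>))
        \<longlongrightarrow> 1 - integral {0..u} (lognormal_density \<mu> \<sigma>)) at_top"
      by (intro tendsto_diff tendsto_integral_lognormal_density tendsto_const)
    have "integral {0..T} (lognormal_density \<mu> \<sigma>) - integral {0..u} (lognormal_density \<mu> \<sigma>)
        \<le> (C / 2) / (1 + u)\<^sup>2" if T: "u \<le> T" for T
    proof -
      have cube: "((\<lambda>v. C * (1 / (1 + v) ^ 3)) has_integral
          C * (1 / (2 * (1 + u)\<^sup>2) - 1 / (2 * (1 + T)\<^sup>2))) {u..T}"
        using has_integral_inverse_cube_shift[of u T] u T by (intro has_integral_mult_right) simp
      have "integral {0..T} (lognormal_density \<mu> \<sigma>) - integral {0..u} (lognormal_density \<mu> \<sigma>)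
          = integral {u..T} (lognormal_density \<mu> \<sigma>)"
        using integral_lognormal_density_split[of 0 u T] u T by simp
      also have "\<dots> \<le> C * (1 / (2 * (1 + u)\<^sup>2) - 1 / (2 * (1 + T)\<^sup>2))"
      proof (rule has_integral_le[OF integrable_integral[OF lognormal_density_integrable_on] cube])
        fix v assume "v \<in> {u..T}"
        then have "0 < 1 + v" using u by simp
        then show "lognormal_density \<mu> \<sigma> v \<le> C * (1 / (1 + v) ^ 3)"
          using C[of v] by (simp add: field_simps mult.commute)
      qed
      also have "\<dots> \<le> (C / 2) / (1 + u)\<^sup>2"
        using C[of 1] lognormal_density_pos[of 1] by (simp add: field_simps)
      finally show ?thesis .
    qed
    then show "\<forall>\<^sub>F T in at_top. integral {0..T} (lognormal_density \<mu> \<sigma>)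
        - integral {0..u} (lognormal_density \<mu> \<sigma>) \<le> (C / 2) / (1 + u)\<^sup>2"
      by (auto simp: eventually_at_top_linorder)
  qed simp
  then show ?thesis by blast
qed

lemma integral_lognormal_survival_bounded:
  "\<exists>B. \<forall>T\<ge>0. integral {0..T} (\<lambda>u. 1 - integral {0..u} (lognormal_density \<mu> \<sigma>)) \<le> B"
proof -
  obtain K where K: "\<And>u. 0 \<le> u \<Longrightarrow> 1 - integral {0..u} (lognormal_density \<mu> \<sigma>) \<le> K / (1 + u)\<^sup>2"
    using lognormal_survival_le by blast
  have "0 \<le> K"
    using K[of 0] by simp
  have "integral {0..T} (\<lambda>u. 1 - integral {0..u} (lognormal_density \<mu> \<sigma>)) \<le> K" if T: "0 \<le> T" for T
  proof -
    have square: "((\<lambda>u. K * (1 / (1 + u)\<^sup>2)) has_integral K * (1 - 1 / (1 + T))) {0..T}"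
      using has_integral_inverse_square_shift[of 0 T] T by (intro has_integral_mult_right) simp
    have "(\<lambda>u. 1 - integral {0..u} (lognormal_density \<mu> \<sigma>)) integrable_on {0..T}"
      by (intro integrable_continuous_real continuous_on_diff continuous_on_const
          indefinite_integral_continuous_1 lognormal_density_integrable_on)
    then have "integral {0..T} (\<lambda>u. 1 - integral {0..u} (lognormal_density \<mu> \<sigma>))
        \<le> K * (1 - 1 / (1 + T))"
      by (rule has_integral_le[OF integrable_integral square]) (simp add: K)
    also have "\<dots> \<le> K"
      using \<open>0 \<le> K\<close> T by (simp add: mult_left_le)
    finally show ?thesis .
  qed
  then show ?thesis by blast
qed

end

section \<open>The infection model\<close>

locale infection_model = causal_kernel g
  for g :: "real \<Rightarrow> real" +
  fixes M \<beta> :: real and I I' :: "real \<Rightarrow> real"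
  assumes beta_nonneg: "0 \<le> \<beta>"
    and initial_pos: "0 < I 0"
    and initial_less: "I 0 < M"
    and kernel_nonneg: "\<And>t. 0 \<le> g t"
    and kernel_mass_less_1: "\<And>t. 0 \<le> t \<Longrightarrow> integral {0..t} g < 1"
    and has_derivative_I: "\<And>t. 0 \<le> t \<Longrightarrow> (I has_real_derivative I' t) (at t within {0..})"
    and equation: "\<And>t. 0 \<le> t \<Longrightarrow>
      I' t = \<beta> * (M - I t) * (I t - integral {0..t} (\<lambda>s. g (t - s) * I s))"
begin

definition active :: "real \<Rightarrow> real" where
  "active t = I t - integral {0..t} (\<lambda>s. g (t - s) * I s)"

lemma derivative_I_eq: "0 \<le> t \<Longrightarrow> I' t = \<beta> * (M - I t) * active t"
  by (simp add: equation active_def)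

lemma continuous_on_I: "continuous_on {0..} I"
  unfolding continuous_on_eq_continuous_within
  using has_derivative_I DERIV_continuous by fastforce

lemma continuous_on_I_interval: "0 \<le> a \<Longrightarrow> continuous_on {a..b} I"
  by (rule continuous_on_subset[OF continuous_on_I]) auto

lemma I_has_derivative_at:
  assumes "0 < t"
  shows "(I has_real_derivative I' t) (at t)"
proof -
  have "(I has_real_derivative I' t) (at t within {0<..})"
    by (rule DERIV_subset[OF has_derivative_I]) (use assms in auto)
  then show ?thesis
    using at_within_open[of t "{0<..}"] assms by simp
qed

lemma continuous_on_active: "continuous_on {0..T} active"
  unfolding active_def
  by (intro continuous_on_diff continuous_on_I_interval continuous_on_causal_convolution) simp_all

lemma active_integrable_on: "active integrable_on {0..T}"
  by (rule integrable_continuous_real[OF continuous_on_active])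

lemma M_minus_I_conservation:
  assumes t: "0 \<le> t"
  shows "(M - I t) * exp (\<beta> * integral {0..t} active) = M - I 0"
proof -
  define \<Phi> where "\<Phi> x = (M - I x) * exp (\<beta> * integral {0..x} active)" for x
  have "(\<Phi> has_real_derivative 0) (at x within {0..t})" if x: "x \<in> {0..t}" for x
  proof -
    have "(\<Phi> has_real_derivative
        - I' x * exp (\<beta> * integral {0..x} active)
        + (M - I x) * (exp (\<beta> * integral {0..x} active) * (\<beta> * active x))) (at x within {0..t})"
      unfolding \<Phi>_def using x
      by (auto intro!: derivative_eq_intros DERIV_subset[OF has_derivative_I]
          integral_has_real_derivative continuous_on_active)
    then show ?thesis
      using x by (simp add: derivative_I_eq algebra_simps)
  qed
  then obtain c where "\<And>x. x \<in> {0..t} \<Longrightarrow> \<Phi> x = c"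
    using has_field_derivative_zero_constant[of "{0..t}" \<Phi>] by auto
  then have "\<Phi> t = \<Phi> 0"
    using t by auto
  then show ?thesis
    by (simp add: \<Phi>_def)
qed

lemma I_less_M:
  assumes "0 \<le> t"
  shows "I t < M"
proof -
  have "0 < (M - I t) * exp (\<beta> * integral {0..t} active)"
    using M_minus_I_conservation[OF assms] initial_less by simp
  then show ?thesis
    by (simp add: zero_less_mult_iff)
qed

lemma I_mono_if_active_nonneg:
  assumes "0 \<le> x" "x \<le> y" and active: "\<And>z. x < z \<Longrightarrow> z < y \<Longrightarrow> 0 \<le> active z"
  shows "I x \<le> I y"
proof (rule DERIV_nonneg_imp_increasing_open[OF \<open>x \<le> y\<close> _ continuous_on_I_interval])
  fix z assume z: "x < z" "z < y"
  then have "0 \<le> I' z"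
    using assms I_less_M[of z] beta_nonneg by (simp add: derivative_I_eq)
  then show "\<exists>d. (I has_real_derivative d) (at z) \<and> 0 \<le> d"
    using I_has_derivative_at[of z] z assms(1) by auto
qed fact

text \<open>At the first zero \<open>t\<^sub>0\<close> of \<open>active\<close>, \<open>I\<close> is still nondecreasing on \<open>[0, t\<^sub>0]\<close>,
  so the convolution at \<open>t\<^sub>0\<close> is at most \<open>I t\<^sub>0\<close> times the mass of \<open>g\<close> on \<open>[0, t\<^sub>0]\<close>,
  which is less than \<open>I t\<^sub>0\<close>.\<close>
lemma active_pos:
  assumes t: "0 \<le> t"
  shows "0 < active t"
proof (rule ccontr)
  assume "\<not> 0 < active t"
  define S where "S = {0..t} \<inter> active -` {..0}"
  have "t \<in> S" "bdd_below S"
    using t \<open>\<not> 0 < active t\<close> by (auto simp: S_def intro: bdd_belowI[of _ 0])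
  moreover have "closed S"
    unfolding S_def by (rule continuous_closed_preimage[OF continuous_on_active]) auto
  ultimately have "Inf S \<in> S"
    using closed_contains_Inf by blast
  define t\<^sub>0 where "t\<^sub>0 = Inf S"
  have t\<^sub>0: "0 \<le> t\<^sub>0" "active t\<^sub>0 \<le> 0"
    using \<open>Inf S \<in> S\<close> by (auto simp: S_def t\<^sub>0_def)
  have before: "0 < active x" if "0 \<le> x" "x < t\<^sub>0" for x
    using cInf_lower[of x S] \<open>bdd_below S\<close> t\<^sub>0 that \<open>t \<in> S\<close> \<open>Inf S \<in> S\<close>
    by (force simp: S_def t\<^sub>0_def)
  have I_le: "I x \<le> I t\<^sub>0" if "0 \<le> x" "x \<le> t\<^sub>0" for x
    using that before by (intro I_mono_if_active_nonneg) (auto intro: less_imp_le)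
  have "0 < I t\<^sub>0"
    using I_le[of 0] t\<^sub>0 initial_pos by simp
  have "integral {0..t\<^sub>0} (\<lambda>s. g (t\<^sub>0 - s) * I s) \<le> integral {0..t\<^sub>0} (\<lambda>s. g (t\<^sub>0 - s) * I t\<^sub>0)"
    using I_le kernel_nonneg continuous_on_I_interval
    by (intro integral_le integrable_continuous_real continuous_on_mult
        continuous_on_compose2[OF kernel_continuous] continuous_intros mult_left_mono) auto
  also have "\<dots> = integral {0..t\<^sub>0} g * I t\<^sub>0"
    using integral_reflect_ivl[where f = "\<lambda>s. g s * I t\<^sub>0" and t = t\<^sub>0] by simp
  also have "\<dots> < I t\<^sub>0"
    using kernel_mass_less_1[OF t\<^sub>0(1)] \<open>0 < I t\<^sub>0\<close> by simp
  finally have "0 < active t\<^sub>0"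
    by (simp add: active_def)
  then show False
    using t\<^sub>0 by simp
qed

lemma integral_active_eq:
  assumes T: "0 \<le> T"
  shows "integral {0..T} active = integral {0..T} (\<lambda>s. I s * (1 - integral {0..T - s} g))"
proof -
  have I_int: "I integrable_on {0..T}"
    by (intro integrable_continuous_real continuous_on_I_interval) simp
  have conv_int: "(\<lambda>t. integral {0..t} (\<lambda>s. g (t - s) * I s)) integrable_on {0..T}"
    by (intro integrable_continuous_real continuous_on_causal_convolution continuous_on_I_interval) simp
  have "integral {0..T} active
      = integral {0..T} I - integral {0..T} (\<lambda>s. I s * integral {0..T - s} g)"
    unfolding active_def integral_diff[OF I_int conv_int]
    using integral_causal_convolution_swap[OF continuous_on_I_interval[of 0 T]] by simp
  also have "\<dots> = integral {0..T} (\<lambda>s. I s * (1 - integral {0..T - s} g))"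
    by (subst integral_diff[symmetric])
      (auto simp: algebra_simps intro!: I_int integrable_continuous_real continuous_on_mult
        continuous_on_I_interval continuous_on_kernel_mass_reflect)
  finally show ?thesis .
qed

lemma integral_active_le:
  assumes B: "\<And>T. 0 \<le> T \<Longrightarrow> integral {0..T} (\<lambda>u. 1 - integral {0..u} g) \<le> B"
    and T: "0 \<le> T"
  shows "integral {0..T} active \<le> M * B"
proof -
  have "integral {0..T} active \<le> integral {0..T} (\<lambda>s. M * (1 - integral {0..T - s} g))"
    unfolding integral_active_eq[OF T]
  proof (rule integral_le)
    fix s assume "s \<in> {0..T}"
    then show "I s * (1 - integral {0..T - s} g) \<le> M * (1 - integral {0..T - s} g)"
      using I_less_M[of s] kernel_mass_less_1[of "T - s"] by (intro mult_right_mono) auto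
  qed (intro integrable_continuous_real continuous_on_mult continuous_on_diff continuous_on_const
      continuous_on_I_interval continuous_on_kernel_mass_reflect order_refl)+
  also have "\<dots> = M * integral {0..T} (\<lambda>u. 1 - integral {0..u} g)"
    using integral_reflect_ivl[where f = "\<lambda>u. M * (1 - integral {0..u} g)" and t = T] by simp
  also have "\<dots> \<le> M * B"
    using B[OF T] initial_pos initial_less by (intro mult_left_mono) auto
  finally show ?thesis .
qed

lemma integral_active_convergent:
  assumes B: "\<And>T. 0 \<le> T \<Longrightarrow> integral {0..T} (\<lambda>u. 1 - integral {0..u} g) \<le> B"
  shows "\<exists>L. ((\<lambda>T. integral {0..T} active) \<longlongrightarrow> L) at_top"
proof -
  have "mono_on {0..} (\<lambda>T. integral {0..T} active)"
  proof (rule mono_onI)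
    fix a b :: real assume "a \<in> {0..}" "b \<in> {0..}" "a \<le> b"
    then have "integral {0..b} active = integral {0..a} active + integral {a..b} active"
      by (simp add: Henstock_Kurzweil_Integration.integral_combine active_integrable_on)
    moreover have "0 \<le> integral {a..b} active"
      using \<open>a \<in> {0..}\<close> active_pos
      by (intro integral_nonneg integrable_on_subinterval[OF active_integrable_on[of b]])
        (auto intro: less_imp_le)
    ultimately show "integral {0..a} active \<le> integral {0..b} active"
      by simp
  qed
  moreover have "bdd_above ((\<lambda>T. integral {0..T} active) ` {0..})"
    using integral_active_le[OF B] by (intro bdd_aboveI2[where M = "M * B"]) simp
  ultimately show ?thesis
    using mono_on_tendsto_SUP_at_top by blast
qed

end

theorem proposition3p9:
  fixes M \<beta> I\<^sub>0 \<mu> \<sigma> :: real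
    and I I' :: "real \<Rightarrow> real"
  assumes "M > 0" and "\<beta> > 0" and "0 < I\<^sub>0" and "I\<^sub>0 < M" and "\<sigma> > 0"
    and "I 0 = I\<^sub>0"
    and "continuous_on {0..} I'"
    and "\<And>t. t \<ge> 0 \<Longrightarrow> (I has_real_derivative I' t) (at t within {0..})"
    and "\<And>t. t \<ge> 0 \<Longrightarrow>
           I' t = \<beta> * (M - I t) *
                  (I t - integral {0..t} (\<lambda>s. lognormal_density \<mu> \<sigma> (t - s) * I s))"
  shows "(\<forall>T\<ge>0. (\<lambda>t. I t - integral {0..t} (\<lambda>s. lognormal_density \<mu> \<sigma> (t - s) * I s))
                    integrable_on {0..T}) \<and>
         (\<exists>L. ((\<lambda>T. integral {0..T}
                    (\<lambda>t. I t - integral {0..t} (\<lambda>s. lognormal_density \<mu> \<sigma> (t - s) * I s)))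
                 \<longlongrightarrow> L) at_top)"
proof -
  interpret infection_model "lognormal_density \<mu> \<sigma>" M \<beta> I I'
    using assms
    by unfold_locales (auto simp: continuous_on_lognormal_density lognormal_density_nonneg
        integral_lognormal_density_less_1)
  obtain B where "\<And>T. 0 \<le> T \<Longrightarrow> integral {0..T} (\<lambda>u. 1 - integral {0..u} (lognormal_density \<mu> \<sigma>)) \<le> B"
    using integral_lognormal_survival_bounded[OF \<open>\<sigma> > 0\<close>] by blast
  then have "\<exists>L. ((\<lambda>T. integral {0..T} active) \<longlongrightarrow> L) at_top"
    by (rule integral_active_convergent)
  moreover have "(\<lambda>t. I t - integral {0..t} (\<lambda>s. lognormal_density \<mu> \<sigma> (t - s) * I s)) = active"
    by (simp add: active_def fun_eq_iff)
  ultimately show ?thesis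
    using active_integrable_on by simp
qed

end
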